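(* Let $m\ge 1$ and $r\ge 1$ be integers, let $x_1,\dots,x_m\in\mathbb{R}^r$ be known covariate vectors such that the $m\times r$ matrix $X=(x_1,\dots,x_m)^T$ has full column rank $r$, and let $D_1,\dots,D_m>0$ be known constants. Consider the hierarchical model $$y_i=\theta_i+e_i,\qquad \theta_i=x_i^T\beta+(1-\delta_i)v_{1i}+\delta_i v_{2i},\qquad i=1,\dots,m,$$ where, given the parameters $\beta\in\mathbb{R}^r$, $A_1,A_2>0$ and $p\in(0,1)$, the random variables $e_i,\delta_i,v_{1i},v_{2i}$ ($i=1,\dots,m$) are mutually independent with $e_i\sim N(0,D_i)$, $v_{1i}\sim N(0,A_1)$, $v_{2i}\sim N(0,A_2)$, and $\delta_i\in\{0,1\}$ with $P(\delta_i=1\mid p)=1-p$. Place on $(\beta,A_1,A_2,p)$ the (possibly improper) prior $$\pi(\beta,A_1,A_2,p)\propto A_1^{-\alpha_1}A_2^{-\alpha_2}\,I(0<A_1<A_2<\infty),\qquad \beta\in\mathbb{R}^r,\ p\in(0,1),$$ i.e. a uniform prior on $\beta\in\mathbb{R}^r$ and on $p\in(0,1)$, where $\alpha_1<1<\alpha_2$ are constants. If (a) $m>r+2(2-\alpha_1-\alpha_2)$ and (b) $2-\alpha_1-\alpha_2>0$, then for every observed data vector $y=(y_1,\dots,y_m)\in\mathbb{R}^m$ the resulting joint posterior distribution of $(\theta_1,\dots,\theta_m,\delta_1,\dots,\delta_m,\beta,A_1,A_2,p)$ given $y$ is proper (the unnormalized posterior has finite, positive total integral).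
   Context: The model is a two-component normal mixture extension of the Fay–Herriot small area model: $y_i$ is a direct survey estimator for small area $i$, $\theta_i$ the small area mean, $D_i$ the known sampling variance. The restriction $A_1<A_2$ in the prior is imposed for identifiability. The condition $\alpha_1<1<\alpha_2$ makes the prior on $(A_1,A_2)$ "partially proper" (conditional prior of $A_2$ given $A_1$ and of $A_1$ given $A_2$ proper). *)

theory Defs
  imports "HOL-Probability.Probability"
begin

text \<open>Rows of X are the covariate vectors x_i; delta i = True means delta_i = 1.
  The v_{1i}, v_{2i} are integrated out: given delta_i, theta_i ~ N(x_i^T beta, A_{delta_i}).\<close>
definition fh_mix_joint ::
  "real^'m \<Rightarrow> real^'r^'m \<Rightarrow> real^'m \<Rightarrow> real \<Rightarrow> real \<Rightarrow>
   real^'m \<Rightarrow> ('m \<Rightarrow> bool) \<Rightarrow> real^'r \<Rightarrow> real \<Rightarrow> real \<Rightarrow> real \<Rightarrow> real" where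
  "fh_mix_joint y X D \<alpha>1 \<alpha>2 \<theta> \<delta> \<beta> A1 A2 p =
     (if 0 < A1 \<and> A1 < A2 \<and> 0 < p \<and> p < 1 then
        (\<Prod>i\<in>UNIV. normal_density (\<theta> $ i) (sqrt (D $ i)) (y $ i) *
           (if \<delta> i then (1 - p) * normal_density ((X *v \<beta>) $ i) (sqrt A2) (\<theta> $ i)
            else p * normal_density ((X *v \<beta>) $ i) (sqrt A1) (\<theta> $ i)))
        * A1 powr (-\<alpha>1) * A2 powr (-\<alpha>2)
      else 0)"

definition fh_mix_total ::
  "real^'m \<Rightarrow> real^'r^'m \<Rightarrow> real^'m \<Rightarrow> real \<Rightarrow> real \<Rightarrow> ennreal" where
  "fh_mix_total y X D \<alpha>1 \<alpha>2 =
     (\<Sum>\<delta>\<in>(UNIV :: ('m \<Rightarrow> bool) set).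
        \<integral>\<^sup>+ z. ennreal (case z of (\<theta>, \<beta>, A1, A2, p) \<Rightarrow> fh_mix_joint y X D \<alpha>1 \<alpha>2 \<theta> \<delta> \<beta> A1 A2 p)
        \<partial>(lborel \<Otimes>\<^sub>M lborel \<Otimes>\<^sub>M lborel \<Otimes>\<^sub>M lborel \<Otimes>\<^sub>M (lborel :: real measure)))"

end

theory Submission
  imports Defs
begin

text \<open>Fix \<open>\<delta>\<close> and \<open>(A\<^sub>1, A\<^sub>2, p)\<close> and integrate out \<open>\<theta>\<close> and \<open>\<beta>\<close>. Since \<open>X\<close> has full
  column rank, some \<open>r\<close> of its rows form an invertible matrix \<open>Y\<close>. Re-centring \<open>\<theta>\<^sub>i\<close> at
  \<open>x\<^sub>i\<^sup>T\<beta>\<close> on these rows leaves a Gaussian likelihood in \<open>\<beta>\<close> with the fixed variances \<open>D\<^sub>i\<close>,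
  whose integral is bounded independently of everything else, while each of the other
  \<open>m - r\<close> rows contributes at most \<open>max A\<^sub>1 d\<^bsup>-1/2\<^esup>\<close>, \<open>d = min D\<^sub>i\<close>. What remains is the
  integral of \<open>A\<^sub>1\<^bsup>-\<alpha>\<^sub>1\<^esup> A\<^sub>2\<^bsup>-\<alpha>\<^sub>2\<^esup> max A\<^sub>1 d\<^bsup>-(m-r)/2\<^esup>\<close> over \<open>0 < A\<^sub>1 < A\<^sub>2\<close>: it converges
  as \<open>A\<^sub>2 \<rightarrow> \<infinity>\<close> because \<open>\<alpha>\<^sub>2 > 1\<close>, as \<open>A\<^sub>1 \<rightarrow> 0\<close> because \<open>\<alpha>\<^sub>1 + \<alpha>\<^sub>2 < 2\<close>, and as
  \<open>A\<^sub>1 \<rightarrow> \<infinity>\<close> by condition (a). Positivity holds because the joint density is positive on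
  a set of infinite measure.\<close>

section \<open>Gaussian integrals\<close>

lemma nn_integral_normal_density:
  assumes "0 < \<sigma>"
  shows "(\<integral>\<^sup>+x. ennreal (normal_density \<mu> \<sigma> x) \<partial>lborel) = 1"
proof -
  have "(\<integral>\<^sup>+x. ennreal (normal_density \<mu> \<sigma> x) \<partial>lborel) = ennreal (\<integral>x. normal_density \<mu> \<sigma> x \<partial>lborel)"
    using assms by (intro nn_integral_eq_integral) (auto intro!: integrable_normal_density)
  then show ?thesis using assms by simp
qed

lemma nn_integral_scaled_normal_density:
  assumes "0 < \<sigma>" "0 \<le> c"
  shows "(\<integral>\<^sup>+x. ennreal (c * normal_density \<mu> \<sigma> x) \<partial>lborel) = ennreal c"
  using assms by (simp add: ennreal_mult nn_integral_cmult nn_integral_normal_density)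

lemma normal_density_sqrt_le:
  assumes "0 < d"
  shows "normal_density \<mu> (sqrt d) x \<le> 1 / sqrt (2 * pi * d)"
  using assms unfolding normal_density_def by (auto intro!: divide_right_mono)

lemma normal_density_commute: "normal_density \<mu> \<sigma> x = normal_density x \<sigma> \<mu>"
  unfolding normal_density_def by (simp add: power2_commute)

lemma normal_density_sqrt:
  "0 < d \<Longrightarrow> normal_density \<mu> (sqrt d) x = 1 / sqrt (2 * pi * d) * exp (- (x - \<mu>)\<^sup>2 / (2 * d))"
  unfolding normal_density_def by simp

lemma normal_density_add_mean: "normal_density (\<mu> + z) \<sigma> x = normal_density \<mu> \<sigma> (x - z)"
  unfolding normal_density_def by (simp add: algebra_simps)

lemma normal_density_at_shift: "normal_density \<mu> \<sigma> (\<mu> + z) = normal_density 0 \<sigma> z"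
  unfolding normal_density_def by (simp add: algebra_simps)

lemma borel_measurable_normal_density_compose [measurable (raw)]:
  assumes "f \<in> borel_measurable M" "g \<in> borel_measurable M" "h \<in> borel_measurable M"
  shows "(\<lambda>x. normal_density (f x) (g x) (h x)) \<in> borel_measurable M"
  using assms unfolding normal_density_def by measurable

lemma nn_integral_lborel_translate:
  fixes c :: "'a::euclidean_space"
  assumes [measurable]: "f \<in> borel_measurable borel"
  shows "(\<integral>\<^sup>+x. f (c + x) \<partial>lborel) = (\<integral>\<^sup>+x. f x \<partial>lborel)"
proof -
  have "(\<integral>\<^sup>+x. f x \<partial>lborel) = (\<integral>\<^sup>+x. f x \<partial>distr lborel borel ((+) c))"
    by (simp add: lborel_distr_plus)
  also have "\<dots> = (\<integral>\<^sup>+x. f (c + x) \<partial>lborel)"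
    by (subst nn_integral_distr) auto
  finally show ?thesis by simp
qed

lemma nn_integral_prod_vec_nth:
  fixes f :: "'n::finite \<Rightarrow> real \<Rightarrow> ennreal"
  assumes [measurable]: "\<And>i. f i \<in> borel_measurable borel"
  shows "(\<integral>\<^sup>+(x::real^'n). (\<Prod>i\<in>UNIV. f i (x $ i)) \<partial>lborel) = (\<Prod>i\<in>UNIV. \<integral>\<^sup>+t. f i t \<partial>lborel)"
proof -
  define g where "g b = f (axis_index b)" for b :: "real^'n"
  have index: "axis_index (axis i (1::real)) = i" for i :: 'n
    by (simp add: axis_index_def axis_eq_axis)
  have inj: "inj_on (\<lambda>i::'n. axis i (1::real)) UNIV"
    by (auto simp: inj_on_def axis_eq_axis)
  have Basis: "(Basis :: (real^'n) set) = (\<lambda>i. axis i 1) ` UNIV"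
    by (auto simp: Basis_vec_def)
  have "(\<Prod>i\<in>UNIV. f i (x $ i)) = (\<Prod>b\<in>Basis. g b (x \<bullet> b))" for x :: "real^'n"
    unfolding Basis by (subst prod.reindex[OF inj]) (simp add: g_def index cart_eq_inner_axis)
  then have "(\<integral>\<^sup>+(x::real^'n). (\<Prod>i\<in>UNIV. f i (x $ i)) \<partial>lborel)
      = (\<integral>\<^sup>+(x::real^'n). (\<Prod>b\<in>Basis. g b (x \<bullet> b)) \<partial>lborel)"
    by simp
  also have "\<dots> = (\<Prod>b\<in>Basis. \<integral>\<^sup>+t. g b t \<partial>lborel)"
    by (rule nn_integral_lborel_prod) (auto simp: g_def)
  also have "\<dots> = (\<Prod>i\<in>UNIV. \<integral>\<^sup>+t. f i t \<partial>lborel)"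
    unfolding Basis by (subst prod.reindex[OF inj]) (simp add: g_def index)
  finally show ?thesis .
qed

lemma nn_integral_lborel_mult_le:
  fixes P :: "'a::euclidean_space \<Rightarrow> 'b::euclidean_space \<Rightarrow> ennreal"
  assumes [measurable]: "(\<lambda>(x, z). P x z) \<in> borel_measurable (lborel \<Otimes>\<^sub>M lborel)" "Q \<in> borel_measurable lborel"
    and P: "\<And>z. (\<integral>\<^sup>+x. P x z \<partial>lborel) \<le> C"
  shows "(\<integral>\<^sup>+x. \<integral>\<^sup>+z. P x z * Q z \<partial>lborel \<partial>lborel) \<le> C * (\<integral>\<^sup>+z. Q z \<partial>lborel)"
proof -
  have "(\<integral>\<^sup>+x. \<integral>\<^sup>+z. P x z * Q z \<partial>lborel \<partial>lborel) = (\<integral>\<^sup>+z. Q z * \<integral>\<^sup>+x. P x z \<partial>lborel \<partial>lborel)"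
    by (subst lborel_pair.Fubini') (simp_all add: mult.commute nn_integral_cmult)
  also have "\<dots> \<le> (\<integral>\<^sup>+z. Q z * C \<partial>lborel)"
    using P by (intro nn_integral_mono mult_left_mono) simp_all
  also have "\<dots> = C * (\<integral>\<^sup>+z. Q z \<partial>lborel)"
    by (subst mult.commute, rule nn_integral_cmult) simp
  finally show ?thesis .
qed

lemma norm_vec_power2: "norm (x::real^'n) ^ 2 = (\<Sum>i\<in>UNIV. (x$i)^2)"
  unfolding power2_norm_eq_inner by (simp add: inner_vec_def power2_eq_square)

lemma nn_integral_exp_neg_square_finite:
  assumes "(0::real) < c"
  shows "(\<integral>\<^sup>+t. ennreal (exp (- c * t^2)) \<partial>lborel) < \<infinity>"
proof -
  define s where "s = sqrt (1 / (2*c))"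
  have s: "s > 0" "s^2 = 1/(2*c)" using assms by (auto simp: s_def)
  have "exp (- c * t^2) = sqrt (pi / c) * normal_density 0 s t" for t
  proof -
    have "2 * pi * s\<^sup>2 = pi / c" "-(t - 0)\<^sup>2 / (2 * s\<^sup>2) = - c * t^2"
      using s assms by (simp_all add: field_simps)
    then show ?thesis unfolding normal_density_def using assms by simp
  qed
  then have "(\<integral>\<^sup>+t. ennreal (exp (- c * t^2)) \<partial>lborel)
      = (\<integral>\<^sup>+t. ennreal (sqrt (pi / c)) * ennreal (normal_density 0 s t) \<partial>lborel)"
    using assms by (simp add: ennreal_mult)
  also have "\<dots> = ennreal (sqrt (pi / c))"
    using nn_integral_normal_density[OF s(1)] by (simp add: nn_integral_cmult)
  finally show ?thesis by simp
qed

lemma nn_integral_exp_neg_norm_square_finite: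
  assumes "(0::real) < c"
  shows "(\<integral>\<^sup>+(x::real^'n). ennreal (exp (- c * norm x ^ 2)) \<partial>lborel) < \<infinity>"
proof -
  have "ennreal (exp (- c * norm x ^ 2)) = (\<Prod>i\<in>UNIV. ennreal (exp (- c * (x$i)^2)))" for x :: "real^'n"
    by (simp add: norm_vec_power2 sum_distrib_left exp_sum prod_ennreal sum_negf[symmetric])
  then have "(\<integral>\<^sup>+(x::real^'n). ennreal (exp (- c * norm x ^ 2)) \<partial>lborel)
      = (\<Prod>i\<in>(UNIV::'n set). \<integral>\<^sup>+t. ennreal (exp (- c * t^2)) \<partial>lborel)"
    using nn_integral_prod_vec_nth[of "\<lambda>_ t. ennreal (exp (- c * t^2))"] by simp
  also have "\<dots> < \<infinity>"
    using nn_integral_exp_neg_square_finite[OF assms] by (simp add: power_less_top_ennreal)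
  finally show ?thesis .
qed

section \<open>Integrating a Gaussian likelihood over the regression coefficients\<close>

lemma borel_measurable_matrix_vector_mult_nth [measurable]:
  "(\<lambda>x. (A *v x) $ i) \<in> borel_measurable (borel :: (real^'n) measure)"
  unfolding matrix_vector_mult_def by simp

lemma borel_measurable_vec_nth_compose [measurable (raw)]:
  "f \<in> borel_measurable M \<Longrightarrow> (\<lambda>x. (f x :: real^'n) $ i) \<in> borel_measurable M"
  by (rule measurable_compose[OF _ borel_measurable_nth])

lemma full_rank_square_submatrix:
  fixes X :: "real^'r^'m"
  assumes "rank X = CARD('r)"
  shows "\<exists>\<sigma>::'r \<Rightarrow> 'm. inj \<sigma> \<and> inj ((*v) (\<chi> j. X $ \<sigma> j))"
proof -
  have injX: "inj ((*v) X)" using assms full_rank_injective by blast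
  obtain B where B: "B \<subseteq> rows X" "independent B" "rows X \<subseteq> span B"
    using maximal_independent_subset by blast
  have row: "row i X = X $ i" for i by (simp add: row_def vec_lambda_eta)
  have "rows X = range (\<lambda>i. row i X)" by (auto simp: rows_def)
  then have "finite (rows X)" by simp
  then have "finite B" using B(1) finite_subset by blast
  have "card B = dim (rows X)" using B basis_card_eq_dim by blast
  also have "\<dots> = CARD('r)" using assms row_rank_def by metis
  finally obtain \<tau> where \<tau>: "bij_betw \<tau> (UNIV :: 'r set) B"
    using finite_same_card_bij[OF _ \<open>finite B\<close>] by (metis finite)
  have "\<exists>i. X $ i = \<tau> j" for j
  proof -
    have "\<tau> j \<in> rows X" using \<tau> B(1) bij_betwE by blast
    then show ?thesis by (auto simp: rows_def row)
  qed
  then obtain \<sigma> where \<sigma>: "\<And>j. X $ \<sigma> j = \<tau> j" by metis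
  have "inj \<sigma>"
    using \<tau> by (metis \<sigma> bij_betw_def inj_def)
  moreover have "x = 0" if "(\<chi> j. X $ \<sigma> j) *v x = 0" for x
  proof -
    have "b \<bullet> x = 0" if "b \<in> B" for b
      using \<open>(\<chi> j. X $ \<sigma> j) *v x = 0\<close> \<tau> that
      by (auto simp: vec_eq_iff matrix_vector_mul_component \<sigma> bij_betw_def)
    then have "v \<bullet> x = 0" if "v \<in> span B" for v
      using orthogonal_to_span[OF that, of x] by (simp add: orthogonal_def inner_commute)
    then have "X $ i \<bullet> x = 0" for i
      using B(3) by (auto simp: rows_def row)
    then have "X *v x = 0" by (simp add: vec_eq_iff matrix_vector_mul_component)
    then show "x = 0" using injX by (metis injD matrix_vector_mult_0_right)
  qed
  then have "inj ((*v) (\<chi> j. X $ \<sigma> j))"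
    by (metis linear_injective_0 matrix_vector_mul_linear)
  ultimately show ?thesis by blast
qed

lemma prod_normal_density_le_exp_norm:
  fixes \<mu> c :: "real^'n" and d :: "'n \<Rightarrow> real"
  assumes d: "\<And>j. 0 < d j" "\<And>j. d j \<le> dmax"
  shows "(\<Prod>j\<in>UNIV. normal_density (\<mu>$j) (sqrt (d j)) (c$j))
    \<le> (\<Prod>j\<in>UNIV. 1 / sqrt (2 * pi * d j)) * exp (- (norm (c - \<mu>))\<^sup>2 / (2 * dmax))"
proof -
  have "(\<Prod>j\<in>UNIV. normal_density (\<mu>$j) (sqrt (d j)) (c$j))
      \<le> (\<Prod>j\<in>UNIV. 1 / sqrt (2 * pi * d j) * exp (- (c$j - \<mu>$j)\<^sup>2 / (2 * dmax)))"
  proof (rule prod_mono, safe)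
    fix j
    have "(c$j - \<mu>$j)\<^sup>2 / (2 * dmax) \<le> (c$j - \<mu>$j)\<^sup>2 / (2 * d j)"
      using d[of j] by (intro divide_left_mono) auto
    then show "normal_density (\<mu>$j) (sqrt (d j)) (c$j)
        \<le> 1 / sqrt (2 * pi * d j) * exp (- (c$j - \<mu>$j)\<^sup>2 / (2 * dmax))"
      using d[of j] by (simp add: normal_density_sqrt divide_right_mono)
  qed simp
  also have "\<dots> = (\<Prod>j\<in>UNIV. 1 / sqrt (2 * pi * d j)) * (\<Prod>j\<in>UNIV. exp (- (c$j - \<mu>$j)\<^sup>2 / (2 * dmax)))"
    by (rule prod.distrib)
  also have "(\<Prod>j\<in>UNIV. exp (- (c$j - \<mu>$j)\<^sup>2 / (2 * dmax))) = exp (- (norm (c - \<mu>))\<^sup>2 / (2 * dmax))"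
    by (simp add: exp_sum[symmetric] norm_vec_power2 sum_negf sum_divide_distrib)
  finally show ?thesis .
qed

text \<open>The bound is uniform in the observation \<open>c\<close>: the likelihood is a Gaussian bump in
  \<open>\<beta>\<close> centred at \<open>Y\<^sup>-\<^sup>1 c\<close> whose width is controlled by the smallest singular value of \<open>Y\<close>.\<close>

lemma nn_integral_prod_normal_density_bounded:
  fixes Y :: "real^'n^'n" and d :: "'n \<Rightarrow> real"
  assumes inj: "inj ((*v) Y)" and d: "\<And>j. 0 < d j"
  shows "\<exists>C<\<infinity>. \<forall>c::real^'n.
    (\<integral>\<^sup>+\<beta>. ennreal (\<Prod>j\<in>UNIV. normal_density ((Y *v \<beta>)$j) (sqrt (d j)) (c$j)) \<partial>lborel) \<le> C"
proof -
  obtain B where B: "B > 0" "\<And>x. B * norm x \<le> norm (Y *v x)"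
    using linear_inj_bounded_below_pos[OF matrix_vector_mul_linear inj] by blast
  have surj: "surj ((*v) Y)"
    using inj full_rank_injective full_rank_surjective by blast
  define dmax where "dmax = Max (range d)"
  have dmax: "d j \<le> dmax" "0 < dmax" for j
    unfolding dmax_def using d[of j] by (auto intro: less_le_trans)
  define K where "K = (\<Prod>j\<in>UNIV. 1 / sqrt (2 * pi * d j))"
  have "K \<ge> 0" unfolding K_def using d by (intro prod_nonneg) (simp add: less_imp_le)
  define \<kappa> where "\<kappa> = B^2 / (2 * dmax)"
  have "\<kappa> > 0" using B dmax by (simp add: \<kappa>_def)
  define G where "G = (\<integral>\<^sup>+(x::real^'n). ennreal (exp (- \<kappa> * norm x ^ 2)) \<partial>lborel)"
  show ?thesis
  proof (intro exI conjI allI)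
    have "G < \<infinity>"
      unfolding G_def by (rule nn_integral_exp_neg_norm_square_finite[OF \<open>\<kappa> > 0\<close>])
    then show "ennreal K * G < \<infinity>" by (simp add: ennreal_mult_less_top)
    fix c :: "real^'n"
    obtain \<beta>0 where \<beta>0: "c = Y *v \<beta>0" using surj by (metis surjD)
    have pointwise: "(\<Prod>j\<in>UNIV. normal_density ((Y *v \<beta>)$j) (sqrt (d j)) (c$j))
        \<le> K * exp (- \<kappa> * norm (- \<beta>0 + \<beta>) ^ 2)" for \<beta>
    proof -
      have "(B * norm (\<beta>0 - \<beta>))\<^sup>2 \<le> norm (Y *v (\<beta>0 - \<beta>)) ^ 2"
        using B by (intro power_mono) auto
      then have "\<kappa> * norm (- \<beta>0 + \<beta>) ^ 2 \<le> norm (c - Y *v \<beta>) ^ 2 / (2 * dmax)"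
        using dmax by (simp add: \<kappa>_def \<beta>0 power_mult_distrib field_simps norm_minus_commute
            matrix_vector_mult_diff_distrib)
      then show ?thesis
        using prod_normal_density_le_exp_norm[of d dmax "Y *v \<beta>" c] d dmax \<open>K \<ge> 0\<close>
        by (fastforce simp: K_def intro: order_trans mult_left_mono)
    qed
    have "(\<integral>\<^sup>+\<beta>. ennreal (\<Prod>j\<in>UNIV. normal_density ((Y *v \<beta>)$j) (sqrt (d j)) (c$j)) \<partial>lborel)
       \<le> (\<integral>\<^sup>+\<beta>. ennreal K * ennreal (exp (- \<kappa> * norm (- \<beta>0 + \<beta>) ^ 2)) \<partial>lborel)"
      using pointwise \<open>K \<ge> 0\<close> by (intro nn_integral_mono) (simp add: ennreal_leI flip: ennreal_mult)
    also have "\<dots> = ennreal K * (\<integral>\<^sup>+\<beta>. ennreal (exp (- \<kappa> * norm (- \<beta>0 + \<beta>) ^ 2)) \<partial>lborel)"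
      by (rule nn_integral_cmult) simp
    also have "(\<integral>\<^sup>+\<beta>. ennreal (exp (- \<kappa> * norm (- \<beta>0 + \<beta>) ^ 2)) \<partial>lborel) = G"
      unfolding G_def by (rule nn_integral_lborel_translate[where f = "\<lambda>x. ennreal (exp (- \<kappa> * norm x ^ 2))"]) simp
    finally show "(\<integral>\<^sup>+\<beta>. ennreal (\<Prod>j\<in>UNIV. normal_density ((Y *v \<beta>)$j) (sqrt (d j)) (c$j)) \<partial>lborel)
      \<le> ennreal K * G" .
  qed
qed

section \<open>The Fay--Herriot likelihood with given area variances\<close>

definition fay_herriot_density ::
  "real^'r^'m \<Rightarrow> real^'m \<Rightarrow> real^'m \<Rightarrow> ('m \<Rightarrow> real) \<Rightarrow> real^'r \<Rightarrow> real^'m \<Rightarrow> real" where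
  "fay_herriot_density X D y a \<beta> \<theta> =
     (\<Prod>i\<in>UNIV. normal_density (\<theta>$i) (sqrt (D$i)) (y$i) * normal_density ((X *v \<beta>)$i) (sqrt (a i)) (\<theta>$i))"

lemma fay_herriot_density_nonneg: "0 \<le> fay_herriot_density X D y a \<beta> \<theta>"
  unfolding fay_herriot_density_def by (simp add: prod_nonneg)

text \<open>Re-centring \<open>\<theta>\<^sub>i\<close> at \<open>x\<^sub>i\<^sup>T\<beta>\<close> on the rows in \<open>T\<close> moves the dependence on \<open>\<beta>\<close> into
  the sampling densities, whose variances \<open>D\<^sub>i\<close> do not depend on the parameters. Off \<open>R\<close>,
  the density carrying \<open>\<beta>\<close> is bounded by its maximum.\<close>

lemma fay_herriot_density_shift_le:
  fixes X :: "real^'r^'m" and R T :: "'m set"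
  assumes "R \<subseteq> T" and D: "\<And>i. 0 < D$i" and a: "\<And>i. 0 < a i"
  shows "fay_herriot_density X D y a \<beta> ((\<chi> i. if i \<in> T then (X *v \<beta>)$i else 0) + z)
    \<le> (\<Prod>i\<in>R. normal_density ((X *v \<beta>)$i) (sqrt (D$i)) (y$i - z$i)) *
       (\<Prod>i\<in>UNIV. if i \<in> T
          then (if i \<in> R then 1 else 1 / sqrt (2 * pi * D$i)) * normal_density 0 (sqrt (a i)) (z$i)
          else 1 / sqrt (2 * pi * a i) * normal_density (z$i) (sqrt (D$i)) (y$i))"
    (is "_ \<le> _ * (\<Prod>i\<in>UNIV. ?q i)")
proof -
  define \<theta> where "\<theta> = (\<chi> i. if i \<in> T then (X *v \<beta>)$i else 0) + z"
  define h where "h i = (if i \<in> R then normal_density ((X *v \<beta>)$i) (sqrt (D$i)) (y$i - z$i) else 1)" for i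
  have "normal_density (\<theta>$i) (sqrt (D$i)) (y$i) * normal_density ((X *v \<beta>)$i) (sqrt (a i)) (\<theta>$i)
      \<le> h i * ?q i" for i
  proof (cases "i \<in> T")
    case True
    then have "normal_density (\<theta>$i) (sqrt (D$i)) (y$i) * normal_density ((X *v \<beta>)$i) (sqrt (a i)) (\<theta>$i)
        = normal_density ((X *v \<beta>)$i) (sqrt (D$i)) (y$i - z$i) * normal_density 0 (sqrt (a i)) (z$i)"
      by (simp add: \<theta>_def normal_density_add_mean normal_density_at_shift)
    also have "\<dots> \<le> h i * ?q i"
    proof (cases "i \<in> R")
      case False
      have "normal_density ((X *v \<beta>)$i) (sqrt (D$i)) (y$i - z$i) \<le> 1 / sqrt (2 * pi * D$i)"
        using D by (rule normal_density_sqrt_le)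
      then have "normal_density ((X *v \<beta>)$i) (sqrt (D$i)) (y$i - z$i) * normal_density 0 (sqrt (a i)) (z$i)
          \<le> 1 / sqrt (2 * pi * D$i) * normal_density 0 (sqrt (a i)) (z$i)"
        by (rule mult_right_mono) simp
      then show ?thesis using True False by (simp add: h_def)
    qed (simp add: h_def True)
    finally show ?thesis .
  next
    case False
    have "normal_density ((X *v \<beta>)$i) (sqrt (a i)) (z$i) \<le> 1 / sqrt (2 * pi * a i)"
      using a by (rule normal_density_sqrt_le)
    then have "normal_density (z$i) (sqrt (D$i)) (y$i) * normal_density ((X *v \<beta>)$i) (sqrt (a i)) (z$i)
        \<le> normal_density (z$i) (sqrt (D$i)) (y$i) * (1 / sqrt (2 * pi * a i))"
      by (rule mult_left_mono) simp
    then show ?thesis using False \<open>R \<subseteq> T\<close> by (auto simp: h_def \<theta>_def mult.commute)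
  qed
  then have "fay_herriot_density X D y a \<beta> \<theta> \<le> (\<Prod>i\<in>UNIV. h i * ?q i)"
    unfolding fay_herriot_density_def by (intro prod_mono) (simp add: mult_nonneg_nonneg)
  also have "\<dots> = (\<Prod>i\<in>UNIV. h i) * (\<Prod>i\<in>UNIV. ?q i)"
    by (rule prod.distrib)
  also have "(\<Prod>i\<in>UNIV. h i) = (\<Prod>i\<in>R. normal_density ((X *v \<beta>)$i) (sqrt (D$i)) (y$i - z$i))"
    unfolding h_def by (simp add: prod.If_cases Int_absorb1)
  finally show ?thesis unfolding \<theta>_def .
qed

lemma nn_integral_fay_herriot_density_le:
  fixes X :: "real^'r^'m" and \<sigma> :: "'r \<Rightarrow> 'm" and T :: "'m set"
  assumes "inj \<sigma>" "range \<sigma> \<subseteq> T" and D: "\<And>i. 0 < D$i" and a: "\<And>i. 0 < a i"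
    and C0: "\<And>c::real^'r. (\<integral>\<^sup>+\<beta>. ennreal (\<Prod>j\<in>UNIV.
      normal_density (((\<chi> j. X $ \<sigma> j) *v \<beta>)$j) (sqrt (D $ \<sigma> j)) (c$j)) \<partial>lborel) \<le> C0"
  shows "(\<integral>\<^sup>+\<beta>. \<integral>\<^sup>+\<theta>. ennreal (fay_herriot_density X D y a \<beta> \<theta>) \<partial>lborel \<partial>lborel)
    \<le> C0 * ennreal (\<Prod>i\<in>- range \<sigma>. if i \<in> T then 1 / sqrt (2 * pi * D$i) else 1 / sqrt (2 * pi * a i))"
proof -
  define t where "t \<beta> = (\<chi> i. if i \<in> T then (X *v \<beta>)$i else 0)" for \<beta>
  define r where "r i = (if i \<in> T then (if i \<in> range \<sigma> then 1 else 1 / sqrt (2 * pi * D$i))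
    else 1 / sqrt (2 * pi * a i))" for i
  define q where "q i s = (if i \<in> T
    then (if i \<in> range \<sigma> then 1 else 1 / sqrt (2 * pi * D$i)) * normal_density 0 (sqrt (a i)) s
    else 1 / sqrt (2 * pi * a i) * normal_density s (sqrt (D$i)) (y$i))" for i s
  define P where "P \<beta> z = ennreal (\<Prod>i\<in>range \<sigma>. normal_density ((X *v \<beta>)$i) (sqrt (D$i)) (y$i - z$i))"
    for \<beta> z :: "real^_"
  define Q where "Q z = (\<Prod>i\<in>UNIV. ennreal (q i (z$i)))" for z :: "real^'m"
  have r: "0 \<le> r i" for i
    using D[of i] a[of i] by (simp add: r_def)
  have q: "0 \<le> q i s" for i s
    using D[of i] a[of i] by (simp add: q_def)
  have [measurable]: "(\<lambda>(\<beta>, z). P \<beta> z) \<in> borel_measurable (lborel \<Otimes>\<^sub>M lborel)" "Q \<in> borel_measurable lborel"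
    unfolding P_def Q_def q_def by measurable
  have integral_q: "(\<integral>\<^sup>+s. ennreal (q i s) \<partial>lborel) = ennreal (r i)" for i
  proof (cases "i \<in> T")
    case True
    then have "q i s = r i * normal_density 0 (sqrt (a i)) s" for s
      by (simp add: q_def r_def)
    then show ?thesis using a[of i] r[of i] by (simp add: nn_integral_scaled_normal_density)
  next
    case False
    then have "q i s = r i * normal_density (y$i) (sqrt (D$i)) s" for s
      by (simp add: q_def r_def normal_density_commute[of s])
    then show ?thesis using D[of i] r[of i] by (simp add: nn_integral_scaled_normal_density)
  qed
  have "ennreal (fay_herriot_density X D y a \<beta> (t \<beta> + z)) \<le> P \<beta> z * Q z" for \<beta> z
  proof -
    have "fay_herriot_density X D y a \<beta> (t \<beta> + z)
        \<le> (\<Prod>i\<in>range \<sigma>. normal_density ((X *v \<beta>)$i) (sqrt (D$i)) (y$i - z$i)) * (\<Prod>i\<in>UNIV. q i (z$i))"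
      using fay_herriot_density_shift_le[where R = "range \<sigma>" and T = T and D = D and a = a
          and X = X and y = y and \<beta> = \<beta> and z = z] assms
      by (simp add: t_def q_def)
    moreover have "P \<beta> z * Q z = ennreal ((\<Prod>i\<in>range \<sigma>. normal_density ((X *v \<beta>)$i) (sqrt (D$i))
        (y$i - z$i)) * (\<Prod>i\<in>UNIV. q i (z$i)))"
      using q by (simp add: P_def Q_def prod_ennreal ennreal_mult prod_nonneg)
    ultimately show ?thesis by (simp add: ennreal_leI)
  qed
  moreover have "(\<integral>\<^sup>+\<theta>. ennreal (fay_herriot_density X D y a \<beta> \<theta>) \<partial>lborel)
      = (\<integral>\<^sup>+z. ennreal (fay_herriot_density X D y a \<beta> (t \<beta> + z)) \<partial>lborel)" for \<beta>
    by (rule nn_integral_lborel_translate[symmetric]) (unfold fay_herriot_density_def, measurable)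
  ultimately have "(\<integral>\<^sup>+\<beta>. \<integral>\<^sup>+\<theta>. ennreal (fay_herriot_density X D y a \<beta> \<theta>) \<partial>lborel \<partial>lborel)
      \<le> (\<integral>\<^sup>+\<beta>. \<integral>\<^sup>+z. P \<beta> z * Q z \<partial>lborel \<partial>lborel)"
    by (simp add: nn_integral_mono)
  also have "\<dots> \<le> C0 * (\<integral>\<^sup>+z. Q z \<partial>lborel)"
  proof (rule nn_integral_lborel_mult_le)
    fix z :: "real^'m"
    have "P \<beta> z = ennreal (\<Prod>j\<in>UNIV. normal_density (((\<chi> j. X $ \<sigma> j) *v \<beta>)$j) (sqrt (D $ \<sigma> j))
        ((\<chi> j. y$\<sigma> j - z$\<sigma> j) $ j))" for \<beta>
      unfolding P_def by (subst prod.reindex[OF \<open>inj \<sigma>\<close>]) (simp add: matrix_vector_mult_def)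
    then show "(\<integral>\<^sup>+\<beta>. P \<beta> z \<partial>lborel) \<le> C0" using C0 by presburger
  qed simp_all
  also have "(\<integral>\<^sup>+z. Q z \<partial>lborel) = (\<Prod>i\<in>UNIV. \<integral>\<^sup>+s. ennreal (q i s) \<partial>lborel)"
    unfolding Q_def by (rule nn_integral_prod_vec_nth) (simp add: q_def)
  also have "(\<Prod>i\<in>UNIV. \<integral>\<^sup>+s. ennreal (q i s) \<partial>lborel) = (\<Prod>i\<in>UNIV. ennreal (r i))"
    using integral_q by simp
  also have "\<dots> = ennreal (\<Prod>i\<in>UNIV. r i)"
    using r by (simp add: prod_ennreal)
  also have "(\<Prod>i\<in>UNIV. r i) = (\<Prod>i\<in>- range \<sigma>. r i)"
    using \<open>range \<sigma> \<subseteq> T\<close> by (intro prod.mono_neutral_right) (auto simp: r_def)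
  also have "\<dots> = (\<Prod>i\<in>- range \<sigma>. if i \<in> T then 1 / sqrt (2 * pi * D$i) else 1 / sqrt (2 * pi * a i))"
    by (rule prod.cong) (auto simp: r_def)
  finally show ?thesis .
qed

lemma inverse_sqrt_two_pi_le:
  assumes "0 < v" "v \<le> u"
  shows "1 / sqrt (2 * pi * u) \<le> 1 / sqrt v"
proof -
  have "1 * u \<le> (2 * pi) * u"
    using assms pi_gt3 by (intro mult_right_mono) auto
  then have "v \<le> 2 * pi * u"
    using assms by linarith
  then show ?thesis using assms by (intro divide_left_mono real_sqrt_le_mono) auto
qed

lemma prod_le_powr_card:
  assumes "finite S" "0 < x" and v: "\<And>i. i \<in> S \<Longrightarrow> 0 \<le> v i \<and> v i \<le> 1 / sqrt x"
  shows "prod v S \<le> x powr - (real (card S) / 2)"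
proof -
  have "prod v S \<le> (\<Prod>i\<in>S. 1 / sqrt x)"
    using v by (intro prod_mono) auto
  also have "\<dots> = (x powr (- 1 / 2)) ^ card S"
    using \<open>0 < x\<close> by (simp add: powr_minus_divide powr_half_sqrt)
  also have "\<dots> = x powr - (real (card S) / 2)"
    using \<open>0 < x\<close> by (simp add: powr_power)
  finally show ?thesis .
qed

text \<open>Re-centring all rows gives the factor \<open>d\<^bsup>-k/2\<^esup>\<close>, re-centring only the rows \<open>\<sigma>\<close> gives
  \<open>A\<^sub>1\<^bsup>-k/2\<^esup>\<close>, where \<open>k = m - r\<close>; the better of the two is \<open>max A\<^sub>1 d\<^bsup>-k/2\<^esup>\<close>.\<close>

lemma nn_integral_fay_herriot_density_le_powr:
  fixes X :: "real^'r^'m" and \<sigma> :: "'r \<Rightarrow> 'm"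
  assumes "inj \<sigma>" and D: "\<And>i. d \<le> D$i" "0 < d" and a: "\<And>i. A1 \<le> a i" "0 < A1"
    and C0: "\<And>c::real^'r. (\<integral>\<^sup>+\<beta>. ennreal (\<Prod>j\<in>UNIV.
      normal_density (((\<chi> j. X $ \<sigma> j) *v \<beta>)$j) (sqrt (D $ \<sigma> j)) (c$j)) \<partial>lborel) \<le> C0"
  shows "(\<integral>\<^sup>+\<beta>. \<integral>\<^sup>+\<theta>. ennreal (fay_herriot_density X D y a \<beta> \<theta>) \<partial>lborel \<partial>lborel)
    \<le> C0 * ennreal (max A1 d powr - ((real CARD('m) - real CARD('r)) / 2))"
proof -
  define T where "T = (if A1 \<le> d then UNIV else range \<sigma>)"
  have pos: "D$i > 0" "a i > 0" for i
    using D a by (auto intro: less_le_trans)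
  have "(\<Prod>i\<in>- range \<sigma>. if i \<in> T then 1 / sqrt (2 * pi * D$i) else 1 / sqrt (2 * pi * a i))
      \<le> max A1 d powr - (real (card (- range \<sigma>)) / 2)"
    using D a pos by (intro prod_le_powr_card)
      (auto simp: T_def max_def less_imp_le[OF pos(1)] less_imp_le[OF pos(2)] intro!: inverse_sqrt_two_pi_le)
  also have "real (card (- range \<sigma>)) = real CARD('m) - real CARD('r)"
    using \<open>inj \<sigma>\<close> card_inj_on_le[OF \<open>inj \<sigma>\<close>]
    by (simp add: Compl_eq_Diff_UNIV card_Diff_subset card_image of_nat_diff)
  finally have "ennreal (\<Prod>i\<in>- range \<sigma>. if i \<in> T then 1 / sqrt (2 * pi * D$i) else 1 / sqrt (2 * pi * a i))
      \<le> ennreal (max A1 d powr - ((real CARD('m) - real CARD('r)) / 2))"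
    by (rule ennreal_leI)
  moreover have "(\<integral>\<^sup>+\<beta>. \<integral>\<^sup>+\<theta>. ennreal (fay_herriot_density X D y a \<beta> \<theta>) \<partial>lborel \<partial>lborel)
    \<le> C0 * ennreal (\<Prod>i\<in>- range \<sigma>. if i \<in> T then 1 / sqrt (2 * pi * D$i) else 1 / sqrt (2 * pi * a i))"
    using pos by (intro nn_integral_fay_herriot_density_le \<open>inj \<sigma>\<close> C0) (auto simp: T_def)
  ultimately show ?thesis by (meson mult_left_mono order_trans zero_le)
qed

section \<open>Integrating out the hyperparameters\<close>

lemma nn_integral_pair3_fst:
  assumes "sigma_finite_measure M2" "sigma_finite_measure M3"
    and f: "f \<in> borel_measurable (M1 \<Otimes>\<^sub>M M2 \<Otimes>\<^sub>M M3)"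
  shows "integral\<^sup>N (M1 \<Otimes>\<^sub>M M2 \<Otimes>\<^sub>M M3) f = (\<integral>\<^sup>+x. \<integral>\<^sup>+y. \<integral>\<^sup>+z. f (x, y, z) \<partial>M3 \<partial>M2 \<partial>M1)"
proof -
  have "integral\<^sup>N (M1 \<Otimes>\<^sub>M M2 \<Otimes>\<^sub>M M3) f = (\<integral>\<^sup>+x. \<integral>\<^sup>+w. f (x, w) \<partial>(M2 \<Otimes>\<^sub>M M3) \<partial>M1)"
    using sigma_finite_measure.nn_integral_fst[OF sigma_finite_pair_measure[OF assms(1,2)] f] ..
  also have "\<dots> = (\<integral>\<^sup>+x. \<integral>\<^sup>+y. \<integral>\<^sup>+z. f (x, y, z) \<partial>M3 \<partial>M2 \<partial>M1)"
    using sigma_finite_measure.nn_integral_fst[OF assms(2) measurable_Pair2[OF f]]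
    by (intro nn_integral_cong) simp
  finally show ?thesis .
qed

lemma nn_integral_pair3_snd:
  assumes "sigma_finite_measure M1" "sigma_finite_measure M2" "sigma_finite_measure M3"
    and f: "f \<in> borel_measurable (M1 \<Otimes>\<^sub>M M2 \<Otimes>\<^sub>M M3)"
  shows "integral\<^sup>N (M1 \<Otimes>\<^sub>M M2 \<Otimes>\<^sub>M M3) f = (\<integral>\<^sup>+z. \<integral>\<^sup>+y. \<integral>\<^sup>+x. f (x, y, z) \<partial>M1 \<partial>M2 \<partial>M3)"
proof -
  note f[measurable]
  interpret P1: pair_sigma_finite M1 "M2 \<Otimes>\<^sub>M M3"
    by (intro pair_sigma_finite.intro assms sigma_finite_pair_measure)
  interpret P2: pair_sigma_finite M2 M3
    by (intro pair_sigma_finite.intro assms)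
  have "integral\<^sup>N (M1 \<Otimes>\<^sub>M M2 \<Otimes>\<^sub>M M3) f = (\<integral>\<^sup>+w. \<integral>\<^sup>+x. f (x, w) \<partial>M1 \<partial>(M2 \<Otimes>\<^sub>M M3))"
    using P1.nn_integral_snd[OF f] ..
  also have "\<dots> = (\<integral>\<^sup>+z. \<integral>\<^sup>+y. \<integral>\<^sup>+x. f (x, y, z) \<partial>M1 \<partial>M2 \<partial>M3)"
    using P2.nn_integral_snd[of "\<lambda>w. \<integral>\<^sup>+x. f (x, w) \<partial>M1"] by simp
  finally show ?thesis .
qed

lemma nn_integral_powr_Icc:
  assumes "-1 < e" "0 \<le> b"
  shows "(\<integral>\<^sup>+x. indicator {0..b} x * ennreal (x powr e) \<partial>lborel) = ennreal (b powr (e + 1) / (e + 1))"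
proof -
  have "integral\<^sup>N lborel (\<lambda>x. indicator {0..b} x * (x powr e)) = b powr (e + 1) / (e + 1)"
    by (rule nn_integral_has_integral_lebesgue[OF _ has_integral_powr_from_0[OF assms]]) simp
  then show ?thesis by (simp add: indicator_mult_ennreal)
qed

lemma nn_integral_powr_Ici:
  assumes "e < -1" "0 < b"
  shows "(\<integral>\<^sup>+x. indicator {b..} x * ennreal (x powr e) \<partial>lborel) = ennreal (b powr (e + 1) / - (e + 1))"
proof -
  have "integral\<^sup>N lborel (\<lambda>x. indicator {b..} x * (x powr e)) = - (b powr (e + 1)) / (e + 1)"
    by (rule nn_integral_has_integral_lebesgue[OF _ has_integral_powr_to_inf[OF assms]]) simp
  then show ?thesis by (simp add: indicator_mult_ennreal minus_divide_right)
qed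

lemma nn_integral_powr_max_finite:
  assumes "-1 < e" "e - s < -1" "0 < d"
  shows "(\<integral>\<^sup>+x. indicator {0<..} x * ennreal (x powr e * max x d powr - s) \<partial>lborel) < \<infinity>"
proof -
  have "(\<integral>\<^sup>+x. indicator {0<..} x * ennreal (x powr e * max x d powr - s) \<partial>lborel)
      \<le> (\<integral>\<^sup>+x. ennreal (d powr - s) * (indicator {0..d} x * ennreal (x powr e))
           + indicator {d..} x * ennreal (x powr (e - s)) \<partial>lborel)"
  proof (intro nn_integral_mono)
    fix x :: real
    show "indicator {0<..} x * ennreal (x powr e * max x d powr - s)
      \<le> ennreal (d powr - s) * (indicator {0..d} x * ennreal (x powr e))
        + indicator {d..} x * ennreal (x powr (e - s))"
      by (cases "x \<le> d") (auto simp: indicator_def max_def powr_diff powr_minus_divide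
          ennreal_mult' mult.commute divide_inverse)
  qed
  also have "\<dots> = ennreal (d powr - s) * ennreal (d powr (e + 1) / (e + 1))
      + ennreal (d powr (e - s + 1) / - (e - s + 1))"
    using assms by (simp add: nn_integral_add nn_integral_cmult nn_integral_powr_Icc nn_integral_powr_Ici)
  also have "\<dots> < \<infinity>"
    by (simp add: ennreal_mult_less_top)
  finally show ?thesis .
qed

lemma nn_integral_hyperprior_finite:
  fixes \<alpha>1 \<alpha>2 s d :: real
  assumes "\<alpha>1 + \<alpha>2 < 2" "1 < \<alpha>2" "2 - \<alpha>1 - \<alpha>2 < s" "0 < d"
  shows "(\<integral>\<^sup>+(A1, A2, p). ennreal (if 0 < A1 \<and> A1 < A2 \<and> 0 < p \<and> p < (1::real)
      then A1 powr - \<alpha>1 * A2 powr - \<alpha>2 * max A1 d powr - s else 0) \<partial>(lborel \<Otimes>\<^sub>M lborel \<Otimes>\<^sub>M lborel)) < \<infinity>"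
proof -
  define g where "g A1 A2 = (if 0 < A1 \<and> A1 < A2 then A1 powr - \<alpha>1 * A2 powr - \<alpha>2 * max A1 d powr - s else 0)"
    for A1 A2 :: real
  define G where "G A1 = A1 powr (1 - \<alpha>1 - \<alpha>2) * max A1 d powr - s" for A1 :: real
  have integral_p: "(\<integral>\<^sup>+p. ennreal (if 0 < A1 \<and> A1 < A2 \<and> 0 < p \<and> p < (1::real)
      then A1 powr - \<alpha>1 * A2 powr - \<alpha>2 * max A1 d powr - s else 0) \<partial>lborel) = ennreal (g A1 A2)"
    (is "?I = _") for A1 A2
  proof -
    have "?I = (\<integral>\<^sup>+p. ennreal (g A1 A2) * indicator {0<..<1::real} p \<partial>lborel)"
      by (intro nn_integral_cong) (simp add: g_def split: split_indicator)
    then show ?thesis by (simp add: nn_integral_cmult_indicator)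
  qed
  have integral_A2: "(\<integral>\<^sup>+A2. ennreal (g A1 A2) \<partial>lborel) \<le> ennreal (1 / (\<alpha>2 - 1)) * (indicator {0<..} A1 * ennreal (G A1))"
    for A1
  proof (cases "0 < A1")
    case True
    define c where "c = A1 powr - \<alpha>1 * max A1 d powr - s"
    have "0 \<le> G A1" by (simp add: G_def)
    have "(\<integral>\<^sup>+A2. ennreal (g A1 A2) \<partial>lborel) \<le> (\<integral>\<^sup>+A2. ennreal c * (indicator {A1..} A2 * ennreal (A2 powr - \<alpha>2)) \<partial>lborel)"
      by (intro nn_integral_mono) (auto simp: g_def c_def indicator_def ennreal_mult' mult_ac)
    also have "\<dots> = ennreal c * ennreal (A1 powr (- \<alpha>2 + 1) / - (- \<alpha>2 + 1))"
      using assms True by (simp add: nn_integral_cmult nn_integral_powr_Ici)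
    also have "\<dots> = ennreal (c * (A1 powr (- \<alpha>2 + 1) / - (- \<alpha>2 + 1)))"
      using assms by (intro ennreal_mult[symmetric]) (simp_all add: c_def)
    also have "c * (A1 powr (- \<alpha>2 + 1) / - (- \<alpha>2 + 1)) = 1 / (\<alpha>2 - 1) * G A1"
      using powr_add[of A1 "- \<alpha>1" "1 - \<alpha>2"] by (simp add: c_def G_def field_simps)
    also have "ennreal (1 / (\<alpha>2 - 1) * G A1) = ennreal (1 / (\<alpha>2 - 1)) * ennreal (G A1)"
      using assms \<open>0 \<le> G A1\<close> by (intro ennreal_mult) auto
    also have "\<dots> = ennreal (1 / (\<alpha>2 - 1)) * (indicator {0<..} A1 * ennreal (G A1))"
      using True by simp
    finally show ?thesis .
  qed (simp add: g_def)
  have "(\<lambda>(A1, A2, p). ennreal (if 0 < A1 \<and> A1 < A2 \<and> 0 < p \<and> p < (1::real)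
      then A1 powr - \<alpha>1 * A2 powr - \<alpha>2 * max A1 d powr - s else 0))
    \<in> borel_measurable (lborel \<Otimes>\<^sub>M lborel \<Otimes>\<^sub>M lborel)"
    by measurable
  then have "(\<integral>\<^sup>+(A1, A2, p). ennreal (if 0 < A1 \<and> A1 < A2 \<and> 0 < p \<and> p < (1::real)
      then A1 powr - \<alpha>1 * A2 powr - \<alpha>2 * max A1 d powr - s else 0) \<partial>(lborel \<Otimes>\<^sub>M lborel \<Otimes>\<^sub>M lborel))
    = (\<integral>\<^sup>+A1. \<integral>\<^sup>+A2. ennreal (g A1 A2) \<partial>lborel \<partial>lborel)"
    by (subst nn_integral_pair3_fst[OF sigma_finite_lborel sigma_finite_lborel]) (simp_all add: integral_p)
  also have "\<dots> \<le> (\<integral>\<^sup>+A1. ennreal (1 / (\<alpha>2 - 1)) * (indicator {0<..} A1 * ennreal (G A1)) \<partial>lborel)"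
    by (intro nn_integral_mono integral_A2)
  also have "\<dots> < \<infinity>"
    using nn_integral_powr_max_finite[of "1 - \<alpha>1 - \<alpha>2" s d] assms
    by (simp add: nn_integral_cmult G_def ennreal_mult_less_top)
  finally show ?thesis .
qed

section \<open>Propriety of the posterior\<close>

lemma borel_measurable_fh_mix_joint [measurable]:
  "(\<lambda>(\<theta>, \<beta>, A1, A2, p). fh_mix_joint y X D \<alpha>1 \<alpha>2 \<theta> \<delta> \<beta> A1 A2 p)
    \<in> borel_measurable (lborel \<Otimes>\<^sub>M lborel \<Otimes>\<^sub>M lborel \<Otimes>\<^sub>M lborel \<Otimes>\<^sub>M (lborel :: real measure))"
  unfolding fh_mix_joint_def by measurable

lemma fh_mix_joint_pos:
  assumes "\<And>i. 0 < D$i" "0 < A1" "A1 < A2" "0 < p" "p < 1"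
  shows "0 < fh_mix_joint y X D \<alpha>1 \<alpha>2 \<theta> \<delta> \<beta> A1 A2 p"
  using assms unfolding fh_mix_joint_def by (auto intro!: prod_pos mult_pos_pos normal_density_pos)

lemma fh_mix_joint_le_fay_herriot_density:
  "fh_mix_joint y X D \<alpha>1 \<alpha>2 \<theta> \<delta> \<beta> A1 A2 p
    \<le> (if 0 < A1 \<and> A1 < A2 \<and> 0 < p \<and> p < 1
        then fay_herriot_density X D y (\<lambda>i. if \<delta> i then A2 else A1) \<beta> \<theta> * (A1 powr - \<alpha>1 * A2 powr - \<alpha>2)
        else 0)"
proof (cases "0 < A1 \<and> A1 < A2 \<and> 0 < p \<and> p < 1")
  case True
  have "(\<Prod>i\<in>UNIV. normal_density (\<theta> $ i) (sqrt (D $ i)) (y $ i) *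
      (if \<delta> i then (1 - p) * normal_density ((X *v \<beta>) $ i) (sqrt A2) (\<theta> $ i)
       else p * normal_density ((X *v \<beta>) $ i) (sqrt A1) (\<theta> $ i)))
    \<le> fay_herriot_density X D y (\<lambda>i. if \<delta> i then A2 else A1) \<beta> \<theta>"
    unfolding fay_herriot_density_def using True
    by (intro prod_mono) (auto intro!: mult_left_mono mult_left_le_one_le)
  then show ?thesis
    using True by (simp add: fh_mix_joint_def mult.assoc mult_right_mono)
qed (auto simp: fh_mix_joint_def)

lemma nn_integral_fh_mix_joint_pos:
  fixes X :: "real^'r^'m"
  assumes "\<And>i. 0 < D$i"
  shows "0 < (\<integral>\<^sup>+z. ennreal (case z of (\<theta>, \<beta>, A1, A2, p) \<Rightarrow> fh_mix_joint y X D \<alpha>1 \<alpha>2 \<theta> \<delta> \<beta> A1 A2 p)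
    \<partial>(lborel \<Otimes>\<^sub>M lborel \<Otimes>\<^sub>M lborel \<Otimes>\<^sub>M lborel \<Otimes>\<^sub>M (lborel :: real measure)))"
    (is "0 < integral\<^sup>N ?M ?f")
proof -
  define B where "B = (UNIV :: (real^'m) set) \<times> (UNIV :: (real^'r) set) \<times> {1<..<2::real} \<times> {2<..<3::real} \<times> {0<..<1::real}"
  have "?f (\<theta>, \<beta>, A1, A2, p) \<noteq> 0" if "1 < A1" "A1 < 2" "2 < A2" "A2 < 3" "0 < p" "p < 1" for \<theta> \<beta> A1 A2 p
    using fh_mix_joint_pos[OF assms, of A1 A2 p] that by (simp add: ennreal_eq_0_iff not_le)
  then have "B \<subseteq> {z \<in> space ?M. ?f z \<noteq> 0}"
    by (auto simp: B_def space_pair_measure)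
  moreover have "emeasure ?M B = \<infinity>"
  proof -
    have sf: "sigma_finite_measure (lborel \<Otimes>\<^sub>M lborel \<Otimes>\<^sub>M (lborel :: real measure))"
      "sigma_finite_measure ((lborel :: (real^'r) measure) \<Otimes>\<^sub>M lborel \<Otimes>\<^sub>M lborel \<Otimes>\<^sub>M (lborel :: real measure))"
      by (intro sigma_finite_pair_measure sigma_finite_lborel)+
    show ?thesis unfolding B_def
      by (simp add: sigma_finite_measure.emeasure_pair_measure_Times[OF sigma_finite_lborel]
          sigma_finite_measure.emeasure_pair_measure_Times[OF sigma_finite_pair_measure[OF sigma_finite_lborel sigma_finite_lborel]]
          sigma_finite_measure.emeasure_pair_measure_Times[OF sf(1)]
          sigma_finite_measure.emeasure_pair_measure_Times[OF sf(2)] ennreal_top_mult)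
  qed
  moreover have "{z \<in> space ?M. ?f z \<noteq> 0} \<in> sets ?M"
    by measurable
  ultimately have "emeasure ?M {z \<in> space ?M. ?f z \<noteq> 0} \<noteq> 0"
    using emeasure_mono[of B "{z \<in> space ?M. ?f z \<noteq> 0}" ?M] by auto
  then show ?thesis
    using nn_integral_0_iff[of ?f ?M] by (simp add: zero_less_iff_neq_zero)
qed

lemma nn_integral_fh_mix_joint_marginal_le:
  fixes X :: "real^'r^'m" and \<sigma> :: "'r \<Rightarrow> 'm"
  assumes "inj \<sigma>" and D: "\<And>i. d \<le> D$i" "0 < d"
    and C0: "\<And>c::real^'r. (\<integral>\<^sup>+\<beta>. ennreal (\<Prod>j\<in>UNIV.
      normal_density (((\<chi> j. X $ \<sigma> j) *v \<beta>)$j) (sqrt (D $ \<sigma> j)) (c$j)) \<partial>lborel) \<le> C0"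
  shows "(\<integral>\<^sup>+\<beta>. \<integral>\<^sup>+\<theta>. ennreal (fh_mix_joint y X D \<alpha>1 \<alpha>2 \<theta> \<delta> \<beta> A1 A2 p) \<partial>lborel \<partial>lborel)
    \<le> C0 * ennreal (if 0 < A1 \<and> A1 < A2 \<and> 0 < p \<and> p < 1
      then A1 powr - \<alpha>1 * A2 powr - \<alpha>2 * max A1 d powr - ((real CARD('m) - real CARD('r)) / 2) else 0)"
proof (cases "0 < A1 \<and> A1 < A2 \<and> 0 < p \<and> p < 1")
  case True
  define c where "c = A1 powr - \<alpha>1 * A2 powr - \<alpha>2"
  have "(\<integral>\<^sup>+\<beta>. \<integral>\<^sup>+\<theta>. ennreal (fh_mix_joint y X D \<alpha>1 \<alpha>2 \<theta> \<delta> \<beta> A1 A2 p) \<partial>lborel \<partial>lborel)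
      \<le> (\<integral>\<^sup>+\<beta>. \<integral>\<^sup>+\<theta>. ennreal (fay_herriot_density X D y (\<lambda>i. if \<delta> i then A2 else A1) \<beta> \<theta>) * ennreal c \<partial>lborel \<partial>lborel)"
  proof (intro nn_integral_mono)
    fix \<beta> \<theta>
    have "fh_mix_joint y X D \<alpha>1 \<alpha>2 \<theta> \<delta> \<beta> A1 A2 p \<le> fay_herriot_density X D y (\<lambda>i. if \<delta> i then A2 else A1) \<beta> \<theta> * c"
      using fh_mix_joint_le_fay_herriot_density[of y X D \<alpha>1 \<alpha>2 \<theta> \<delta> \<beta> A1 A2 p] True
      by (simp add: c_def)
    then show "ennreal (fh_mix_joint y X D \<alpha>1 \<alpha>2 \<theta> \<delta> \<beta> A1 A2 p)
        \<le> ennreal (fay_herriot_density X D y (\<lambda>i. if \<delta> i then A2 else A1) \<beta> \<theta>) * ennreal c"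
      by (simp add: c_def ennreal_leI fay_herriot_density_nonneg flip: ennreal_mult)
  qed
  also have "\<dots> = (\<integral>\<^sup>+\<beta>. \<integral>\<^sup>+\<theta>. ennreal (fay_herriot_density X D y (\<lambda>i. if \<delta> i then A2 else A1) \<beta> \<theta>) \<partial>lborel \<partial>lborel) * ennreal c"
    by (simp add: nn_integral_multc fay_herriot_density_def)
  also have "\<dots> \<le> C0 * ennreal (max A1 d powr - ((real CARD('m) - real CARD('r)) / 2)) * ennreal c"
    using True by (intro mult_right_mono nn_integral_fay_herriot_density_le_powr[OF \<open>inj \<sigma>\<close> D])
      (auto simp: C0)
  finally show ?thesis
    using True by (simp add: c_def ennreal_mult' mult_ac)
qed (auto simp: fh_mix_joint_def)

lemma nn_integral_fh_mix_joint_finite: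
  fixes X :: "real^'r^'m" and D y :: "real^'m" and \<alpha>1 \<alpha>2 :: real
  assumes "rank X = CARD('r)" and D: "\<And>i. 0 < D$i"
    and "1 < \<alpha>2" "\<alpha>1 + \<alpha>2 < 2" "real CARD('r) + 2 * (2 - \<alpha>1 - \<alpha>2) < real CARD('m)"
  shows "(\<integral>\<^sup>+z. ennreal (case z of (\<theta>, \<beta>, A1, A2, p) \<Rightarrow> fh_mix_joint y X D \<alpha>1 \<alpha>2 \<theta> \<delta> \<beta> A1 A2 p)
    \<partial>(lborel \<Otimes>\<^sub>M lborel \<Otimes>\<^sub>M lborel \<Otimes>\<^sub>M lborel \<Otimes>\<^sub>M (lborel :: real measure))) < \<infinity>"
proof -
  obtain \<sigma> :: "'r \<Rightarrow> 'm" where \<sigma>: "inj \<sigma>" "inj ((*v) (\<chi> j. X $ \<sigma> j))"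
    using full_rank_square_submatrix[OF assms(1)] by blast
  obtain C0 where "C0 < \<infinity>" and C0: "\<And>c::real^'r. (\<integral>\<^sup>+\<beta>. ennreal (\<Prod>j\<in>UNIV.
      normal_density (((\<chi> j. X $ \<sigma> j) *v \<beta>)$j) (sqrt (D $ \<sigma> j)) (c$j)) \<partial>lborel) \<le> C0"
    using nn_integral_prod_normal_density_bounded[OF \<sigma>(2), of "\<lambda>j. D $ \<sigma> j"] D by blast
  define d where "d = Min (range (($) D))"
  have d: "0 < d" "\<And>i. d \<le> D$i"
    using D by (auto simp: d_def)
  define s where "s = (real CARD('m) - real CARD('r)) / 2"
  define H where "H = (\<lambda>(A1, A2, p). ennreal (if 0 < A1 \<and> A1 < A2 \<and> 0 < p \<and> p < (1::real)
    then A1 powr - \<alpha>1 * A2 powr - \<alpha>2 * max A1 d powr - s else 0))"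
  have meas: "(\<lambda>z. ennreal (case z of (\<theta>, \<beta>, A1, A2, p) \<Rightarrow> fh_mix_joint y X D \<alpha>1 \<alpha>2 \<theta> \<delta> \<beta> A1 A2 p))
    \<in> borel_measurable (lborel \<Otimes>\<^sub>M lborel \<Otimes>\<^sub>M lborel \<Otimes>\<^sub>M lborel \<Otimes>\<^sub>M (lborel :: real measure))"
    by measurable
  have "(\<integral>\<^sup>+z. ennreal (case z of (\<theta>, \<beta>, A1, A2, p) \<Rightarrow> fh_mix_joint y X D \<alpha>1 \<alpha>2 \<theta> \<delta> \<beta> A1 A2 p)
      \<partial>(lborel \<Otimes>\<^sub>M lborel \<Otimes>\<^sub>M lborel \<Otimes>\<^sub>M lborel \<Otimes>\<^sub>M (lborel :: real measure)))
    = (\<integral>\<^sup>+(A1, A2, p). \<integral>\<^sup>+\<beta>. \<integral>\<^sup>+\<theta>. ennreal (fh_mix_joint y X D \<alpha>1 \<alpha>2 \<theta> \<delta> \<beta> A1 A2 p)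
      \<partial>lborel \<partial>lborel \<partial>(lborel \<Otimes>\<^sub>M lborel \<Otimes>\<^sub>M lborel))"
    using nn_integral_pair3_snd[OF sigma_finite_lborel sigma_finite_lborel
        sigma_finite_pair_measure[OF sigma_finite_lborel sigma_finite_pair_measure] meas]
    by (simp add: sigma_finite_lborel split_beta')
  also have "\<dots> \<le> (\<integral>\<^sup>+q. C0 * H q \<partial>(lborel \<Otimes>\<^sub>M lborel \<Otimes>\<^sub>M lborel))"
  proof (intro nn_integral_mono)
    fix q :: "real \<times> real \<times> real"
    obtain A1 A2 p where "q = (A1, A2, p)" by (cases q rule: prod_cases3)
    then show "(case q of (A1, A2, p) \<Rightarrow> \<integral>\<^sup>+\<beta>. \<integral>\<^sup>+\<theta>. ennreal (fh_mix_joint y X D \<alpha>1 \<alpha>2 \<theta> \<delta> \<beta> A1 A2 p)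
        \<partial>lborel \<partial>lborel) \<le> C0 * H q"
      unfolding H_def s_def by (simp only: prod.case) (rule nn_integral_fh_mix_joint_marginal_le[OF \<sigma>(1) d(2,1) C0])
  qed
  also have "\<dots> = C0 * integral\<^sup>N (lborel \<Otimes>\<^sub>M lborel \<Otimes>\<^sub>M lborel) H"
    by (rule nn_integral_cmult) (simp add: H_def)
  also have "\<dots> < \<infinity>"
    using nn_integral_hyperprior_finite[of \<alpha>1 \<alpha>2 s d] assms d \<open>C0 < \<infinity>\<close>
    by (simp add: H_def s_def ennreal_mult_less_top)
  finally show ?thesis .
qed

theorem theorem1:
  fixes X :: "real^'r^'m" and D y :: "real^'m" and \<alpha>1 \<alpha>2 :: real
  assumes "rank X = CARD('r)"
    and "\<forall>i. D $ i > 0"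
    and "\<alpha>1 < 1" and "1 < \<alpha>2"
    and "real CARD('m) > real CARD('r) + 2 * (2 - \<alpha>1 - \<alpha>2)"
    and "2 - \<alpha>1 - \<alpha>2 > 0"
  shows "0 < fh_mix_total y X D \<alpha>1 \<alpha>2 \<and> fh_mix_total y X D \<alpha>1 \<alpha>2 < \<infinity>"
proof
  have "\<alpha>1 + \<alpha>2 < 2" using assms(6) by simp
  then show "fh_mix_total y X D \<alpha>1 \<alpha>2 < \<infinity>"
    unfolding fh_mix_total_def
    using nn_integral_fh_mix_joint_finite[OF assms(1) assms(2)[rule_format] assms(4) _ assms(5)] by simp
  have "0 < (\<integral>\<^sup>+ z. ennreal (case z of (\<theta>, \<beta>, A1, A2, p) \<Rightarrow> fh_mix_joint y X D \<alpha>1 \<alpha>2 \<theta> (\<lambda>_. False) \<beta> A1 A2 p)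
      \<partial>(lborel \<Otimes>\<^sub>M lborel \<Otimes>\<^sub>M lborel \<Otimes>\<^sub>M lborel \<Otimes>\<^sub>M (lborel :: real measure)))"
    using assms(2) by (intro nn_integral_fh_mix_joint_pos) auto
  also have "\<dots> \<le> fh_mix_total y X D \<alpha>1 \<alpha>2"
    unfolding fh_mix_total_def by (rule member_le_sum) auto
  finally show "0 < fh_mix_total y X D \<alpha>1 \<alpha>2" .
qed

end
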